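(* Let $\Omega\subset\mathbb R^2$ be a bounded Lipschitz domain and for $t>0$ let $\Omega_t=\{(x,ty):(x,y)\in\Omega\}$. Then for every $t\ge1$ and every $k\ge1$, $$\mu_k(\Omega_t)\le\mu_k(\Omega).$$ (Equivalently, $\mu_k(\Omega)\le\mu_k(\Omega_t)$ for every $t\in(0,1)$.)
   Context: Neumann eigenvalues of $-\Delta$ on a bounded Lipschitz domain are counted with multiplicity as $0=\mu_0<\mu_1\le\mu_2\le\dots$. *)

theory Defs
  imports "HOL-Analysis.Analysis"
begin

type_synonym R2 = "real \<times> real"

definition rot2 :: "real \<Rightarrow> R2 \<Rightarrow> R2" where
  "rot2 th p = (cos th * fst p - sin th * snd p, sin th * fst p + cos th * snd p)"

text \<open>A bounded Lipschitz domain: a bounded connected open set whose boundary is,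
  near each boundary point and in suitably rotated coordinates, the graph of a
  Lipschitz function with the domain lying on one side (below the graph).\<close>
definition lipschitz_domain :: "R2 set \<Rightarrow> bool" where
  "lipschitz_domain \<Omega> \<longleftrightarrow> open \<Omega> \<and> connected \<Omega> \<and> bounded \<Omega> \<and> \<Omega> \<noteq> {} \<and>
     (\<forall>p \<in> frontier \<Omega>. \<exists>th r h L g.
        r > 0 \<and> h > 0 \<and> L-lipschitz_on UNIV (g :: real \<Rightarrow> real) \<and> g 0 = 0 \<and>
        (\<forall>a. \<bar>a\<bar> < r \<longrightarrow> \<bar>g a\<bar> < h / 2) \<and>
        (\<forall>a b. \<bar>a\<bar> < r \<and> \<bar>b\<bar> < h \<longrightarrow>
              (p + rot2 th (a, b) \<in> \<Omega> \<longleftrightarrow> b < g a)))"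

definition partial1 :: "(R2 \<Rightarrow> real) \<Rightarrow> R2 \<Rightarrow> real" where
  "partial1 f p = deriv (\<lambda>s. f (s, snd p)) (fst p)"

definition partial2 :: "(R2 \<Rightarrow> real) \<Rightarrow> R2 \<Rightarrow> real" where
  "partial2 f p = deriv (\<lambda>s. f (fst p, s)) (snd p)"

text \<open>Iterated partial derivative; True = d/dx, False = d/dy.\<close>
fun dop :: "bool list \<Rightarrow> (R2 \<Rightarrow> real) \<Rightarrow> R2 \<Rightarrow> real" where
  "dop [] f = f"
| "dop (b # bs) f = (if b then partial1 else partial2) (dop bs f)"

definition smooth2 :: "(R2 \<Rightarrow> real) \<Rightarrow> bool" where
  "smooth2 f \<longleftrightarrow> (\<forall>bs. continuous_on UNIV (dop bs f) \<and>
      (\<forall>p. (\<lambda>s. dop bs f (s, snd p)) differentiable (at (fst p)) \<and>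
           (\<lambda>s. dop bs f (fst p, s)) differentiable (at (snd p))))"

definition test_fun :: "R2 set \<Rightarrow> (R2 \<Rightarrow> real) \<Rightarrow> bool" where
  "test_fun \<Omega> \<phi> \<longleftrightarrow> smooth2 \<phi> \<and> compact (closure {p. \<phi> p \<noteq> 0}) \<and>
      closure {p. \<phi> p \<noteq> 0} \<subseteq> \<Omega>"

definition L2_on :: "R2 set \<Rightarrow> (R2 \<Rightarrow> real) \<Rightarrow> bool" where
  "L2_on \<Omega> f \<longleftrightarrow> (\<lambda>x. indicator \<Omega> x * f x) \<in> borel_measurable lborel \<and>
      set_integrable lborel \<Omega> (\<lambda>x. (f x)\<^sup>2)"

definition weak_grad :: "R2 set \<Rightarrow> (R2 \<Rightarrow> real) \<Rightarrow> (R2 \<Rightarrow> real) \<Rightarrow> (R2 \<Rightarrow> real) \<Rightarrow> bool" where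
  "weak_grad \<Omega> f g1 g2 \<longleftrightarrow>
     (\<forall>\<phi>. test_fun \<Omega> \<phi> \<longrightarrow>
        (LINT x:\<Omega>|lborel. f x * partial1 \<phi> x) = - (LINT x:\<Omega>|lborel. g1 x * \<phi> x) \<and>
        (LINT x:\<Omega>|lborel. f x * partial2 \<phi> x) = - (LINT x:\<Omega>|lborel. g2 x * \<phi> x))"

definition H1_with_grad :: "R2 set \<Rightarrow> (R2 \<Rightarrow> real) \<Rightarrow> (R2 \<Rightarrow> real) \<Rightarrow> (R2 \<Rightarrow> real) \<Rightarrow> bool" where
  "H1_with_grad \<Omega> f g1 g2 \<longleftrightarrow> L2_on \<Omega> f \<and> L2_on \<Omega> g1 \<and> L2_on \<Omega> g2 \<and> weak_grad \<Omega> f g1 g2"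

text \<open>An admissible family: functions F i = (f_i, g1_i, g2_i), i = 0..k, in H^1(\<Omega>)
  (with their weak gradients) that are linearly independent as elements of L^2(\<Omega>);
  they span a (k+1)-dimensional subspace of H^1(\<Omega>).\<close>
definition admissible_family :: "R2 set \<Rightarrow> nat \<Rightarrow> (nat \<Rightarrow> (R2 \<Rightarrow> real) \<times> (R2 \<Rightarrow> real) \<times> (R2 \<Rightarrow> real)) \<Rightarrow> bool" where
  "admissible_family \<Omega> k F \<longleftrightarrow>
     (\<forall>i\<le>k. H1_with_grad \<Omega> (fst (F i)) (fst (snd (F i))) (snd (snd (F i)))) \<and>
     (\<forall>c :: nat \<Rightarrow> real. (AE x in lborel. x \<in> \<Omega> \<longrightarrow> (\<Sum>i\<le>k. c i * fst (F i) x) = 0)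
          \<longrightarrow> (\<forall>i\<le>k. c i = 0))"

text \<open>Rayleigh quotient of the combination \<Sum> c_i f_i (its weak gradient is \<Sum> c_i grad f_i).\<close>
definition rayleigh :: "R2 set \<Rightarrow> nat \<Rightarrow> (nat \<Rightarrow> (R2 \<Rightarrow> real) \<times> (R2 \<Rightarrow> real) \<times> (R2 \<Rightarrow> real)) \<Rightarrow> (nat \<Rightarrow> real) \<Rightarrow> real" where
  "rayleigh \<Omega> k F c =
     (LINT x:\<Omega>|lborel. (\<Sum>i\<le>k. c i * fst (snd (F i)) x)\<^sup>2 + (\<Sum>i\<le>k. c i * snd (snd (F i)) x)\<^sup>2)
     / (LINT x:\<Omega>|lborel. (\<Sum>i\<le>k. c i * fst (F i) x)\<^sup>2)"

text \<open>mu_k(\<Omega>) = min over (k+1)-dimensional subspaces V of H^1(\<Omega>) of the max of the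
  Rayleigh quotient over V \ {0}; counted with multiplicity, mu_0 = 0.\<close>
definition neumann_eigenvalue :: "R2 set \<Rightarrow> nat \<Rightarrow> real" where
  "neumann_eigenvalue \<Omega> k =
     Inf {Sup {rayleigh \<Omega> k F c | c. \<exists>i\<le>k. c i \<noteq> 0} | F. admissible_family \<Omega> k F}"

definition stretch :: "real \<Rightarrow> R2 set \<Rightarrow> R2 set" where
  "stretch t \<Omega> = (\<lambda>(x, y). (x, t * y)) ` \<Omega>"

end

theory Submission
  imports Defs
begin

(* The stretch (x, y) \<mapsto> (x, t y) carries H^1(\<Omega>) onto H^1(\<Omega>_t): u becomes u(x, y/t), with
   weak gradient (\<partial>_x u, \<partial>_y u / t) at (x, y/t), and the Jacobian t cancels in the Rayleigh
   quotient.  So every admissible (k+1)-dimensional family on \<Omega> yields one on \<Omega>_t whose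
   Rayleigh quotients are (\<integral>|\<partial>_x u|^2 + t^-2 \<integral>|\<partial>_y u|^2) / \<integral>u^2, which for t \<ge> 1 is at most
   the original quotient; taking the maximum over each family and the minimum over families
   gives \<mu>_k(\<Omega>_t) \<le> \<mu>_k(\<Omega>). *)

definition vscale :: "real \<Rightarrow> R2 \<Rightarrow> R2" where
  "vscale c p = (fst p, c * snd p)"

lemma vscale_inverse:
  assumes "c \<noteq> 0"
  shows "vscale c (vscale (1/c) p) = p" and "vscale (1/c) (vscale c p) = p"
  using assms by (auto simp: vscale_def)

lemma image_vscale_inverse: "c \<noteq> 0 \<Longrightarrow> vscale (1/c) ` vscale c ` A = A"
  by (force simp: image_image vscale_inverse)

lemma indicator_image_vscale:
  "c \<noteq> 0 \<Longrightarrow> (indicator (vscale c ` A) x :: real) = indicator A (vscale (1/c) x)"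
  by (metis image_eqI imageE indicator_simps vscale_inverse)

lemma stretch_eq_image_vscale: "stretch t \<Omega> = vscale t ` \<Omega>"
  unfolding stretch_def vscale_def by (simp add: case_prod_beta')

lemma linear_vscale: "linear (vscale c)"
  by (rule linearI) (auto simp: vscale_def algebra_simps)

lemma inj_vscale: "c \<noteq> 0 \<Longrightarrow> inj (vscale c)"
  by (rule injI) (auto simp: vscale_def prod_eq_iff)

lemma continuous_on_vscale: "continuous_on A (vscale c)"
  unfolding vscale_def[abs_def] by (intro continuous_intros)

lemma vscale_measurable [measurable]: "vscale c \<in> borel_measurable borel"
  by (rule borel_measurable_continuous_onI[OF continuous_on_vscale])

subsection \<open>Change of variables\<close>

lemma lborel_eq_density_vscale:
  assumes "c \<noteq> 0"
  shows "lborel = density (distr lborel borel (vscale c)) (\<lambda>_. ennreal \<bar>c\<bar>)"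
proof -
  define d where "d = (\<lambda>j::R2. if j = (0, 1) then c else 1)"
  have "lborel = density (distr lborel borel (\<lambda>x. 0 + (\<Sum>j\<in>Basis. (d j * (x \<bullet> j)) *\<^sub>R j)))
          (\<lambda>_. (\<Prod>j\<in>Basis. \<bar>d j\<bar>))"
    by (rule lborel_affine_euclidean) (use assms in \<open>auto simp: d_def Basis_prod_def\<close>)
  also have "(\<lambda>x::R2. 0 + (\<Sum>j\<in>Basis. (d j * (x \<bullet> j)) *\<^sub>R j)) = vscale c"
    by (auto simp: d_def Basis_prod_def vscale_def fun_eq_iff)
  also have "(\<Prod>j\<in>(Basis::R2 set). \<bar>d j\<bar>) = \<bar>c\<bar>"
    by (simp add: d_def Basis_prod_def)
  finally show ?thesis .
qed

lemma AE_vscale: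
  assumes "c \<noteq> 0" and "AE x in lborel. P x"
  shows "AE p in lborel. P (vscale c p)"
proof -
  have "AE x in density (distr lborel borel (vscale c)) (\<lambda>_. ennreal \<bar>c\<bar>). P x"
    by (subst lborel_eq_density_vscale[OF assms(1), symmetric]) (fact assms(2))
  then have "AE x in distr lborel borel (vscale c). P x"
    using assms by (simp add: AE_density)
  then show ?thesis
    by (rule AE_distrD[rotated]) (simp add: measurable_lborel1)
qed

lemma integrable_comp_vscale:
  fixes h :: "R2 \<Rightarrow> real"
  assumes c: "c \<noteq> 0" and h: "integrable lborel h"
  shows "integrable lborel (\<lambda>p. h (vscale c p))"
proof -
  have [measurable]: "h \<in> borel_measurable borel"
    using borel_measurable_integrable[OF h] by simp
  have "integrable (density (distr lborel borel (vscale c)) (\<lambda>_. ennreal \<bar>c\<bar>)) h"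
    by (subst lborel_eq_density_vscale[OF c, symmetric]) (fact h)
  then have "integrable (distr lborel borel (vscale c)) (\<lambda>x. \<bar>c\<bar> * h x)"
    by (subst (asm) integrable_real_density) auto
  then have "integrable lborel (\<lambda>p. \<bar>c\<bar> * h (vscale c p))"
    by (subst (asm) integrable_distr_eq) auto
  then show ?thesis
    using c by simp
qed

lemma integrable_comp_vscale_iff:
  fixes h :: "R2 \<Rightarrow> real"
  assumes "c \<noteq> 0"
  shows "integrable lborel (\<lambda>p. h (vscale c p)) \<longleftrightarrow> integrable lborel h"
  using integrable_comp_vscale[OF assms, of h]
    integrable_comp_vscale[of "1/c" "\<lambda>p. h (vscale c p)"] assms
  by (auto simp: vscale_inverse)

lemma integral_comp_vscale:
  fixes h :: "R2 \<Rightarrow> real"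
  assumes c: "c \<noteq> 0"
  shows "integral\<^sup>L lborel h = \<bar>c\<bar> * integral\<^sup>L lborel (\<lambda>p. h (vscale c p))"
proof (cases "integrable lborel h")
  case True
  then have [measurable]: "h \<in> borel_measurable borel"
    using borel_measurable_integrable by simp
  have "integral\<^sup>L lborel h = integral\<^sup>L (density (distr lborel borel (vscale c)) (\<lambda>_. ennreal \<bar>c\<bar>)) h"
    by (subst lborel_eq_density_vscale[OF c, symmetric]) (rule refl)
  also have "\<dots> = integral\<^sup>L (distr lborel borel (vscale c)) (\<lambda>x. \<bar>c\<bar> * h x)"
    by (rule integral_real_density) auto
  also have "\<dots> = integral\<^sup>L lborel (\<lambda>p. \<bar>c\<bar> * h (vscale c p))"
    by (rule integral_distr) auto
  finally show ?thesis
    by simp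
next
  case False
  then show ?thesis
    using integrable_comp_vscale_iff[OF c] by (simp add: not_integrable_integral_eq)
qed

lemma set_integral_image_vscale:
  fixes h :: "R2 \<Rightarrow> real"
  assumes "c \<noteq> 0"
  shows "(LINT x:vscale c ` \<Omega>|lborel. h x) = \<bar>c\<bar> * (LINT p:\<Omega>|lborel. h (vscale c p))"
  unfolding set_lebesgue_integral_def
  using integral_comp_vscale[OF assms, of "\<lambda>x. indicator (vscale c ` \<Omega>) x *\<^sub>R h x"] assms
  by (simp add: indicator_image_vscale vscale_inverse)

lemma partials_scaled_comp_vscale:
  fixes g :: "R2 \<Rightarrow> real"
  assumes d1: "(\<lambda>s. g (s, c * snd p)) differentiable (at (fst p))"
      and d2: "(\<lambda>s. g (fst p, s)) differentiable (at (c * snd p))"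
  shows "partial1 (\<lambda>q. k * g (vscale c q)) p = k * partial1 g (vscale c p)"
    and "partial2 (\<lambda>q. k * g (vscale c q)) p = k * c * partial2 g (vscale c p)"
    and "(\<lambda>s. k * g (vscale c (s, snd p))) differentiable (at (fst p))"
    and "(\<lambda>s. k * g (vscale c (fst p, s))) differentiable (at (snd p))"
proof -
  have "DERIV (\<lambda>s. g (s, c * snd p)) (fst p) :> partial1 g (vscale c p)"
    using d1 DERIV_deriv_iff_real_differentiable by (simp add: partial1_def vscale_def)
  then have D1: "DERIV (\<lambda>s. k * g (vscale c (s, snd p))) (fst p) :> k * partial1 g (vscale c p)"
    using DERIV_cmult by (simp add: vscale_def)
  then show "partial1 (\<lambda>q. k * g (vscale c q)) p = k * partial1 g (vscale c p)"
    unfolding partial1_def[of "\<lambda>q. k * g (vscale c q)"] by (rule DERIV_imp_deriv)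
  show "(\<lambda>s. k * g (vscale c (s, snd p))) differentiable (at (fst p))"
    using D1 real_differentiable_def by blast
  have "DERIV (\<lambda>s. g (fst p, s)) (c * snd p) :> partial2 g (vscale c p)"
    using d2 DERIV_deriv_iff_real_differentiable by (simp add: partial2_def vscale_def)
  moreover have "DERIV (\<lambda>s. c * s) (snd p) :> c"
    using DERIV_cmult[OF DERIV_ident, of c] by simp
  ultimately have D2: "DERIV (\<lambda>s. k * g (vscale c (fst p, s))) (snd p) :> k * c * partial2 g (vscale c p)"
    using DERIV_cmult[OF DERIV_chain2] by (fastforce simp: vscale_def mult_ac)
  then show "partial2 (\<lambda>q. k * g (vscale c q)) p = k * c * partial2 g (vscale c p)"
    unfolding partial2_def[of "\<lambda>q. k * g (vscale c q)"] by (rule DERIV_imp_deriv)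
  show "(\<lambda>s. k * g (vscale c (fst p, s))) differentiable (at (snd p))"
    using D2 real_differentiable_def by blast
qed

lemma smooth2_differentiable_sections:
  assumes "smooth2 \<phi>"
  shows "(\<lambda>s. dop bs \<phi> (s, y)) differentiable (at x)"
    and "(\<lambda>s. dop bs \<phi> (x, s)) differentiable (at y)"
  using assms unfolding smooth2_def by (metis fst_conv snd_conv)+

lemma dop_comp_vscale:
  assumes "smooth2 \<phi>"
  shows "dop bs (\<lambda>q. \<phi> (vscale c q)) = (\<lambda>q. c ^ length (filter Not bs) * dop bs \<phi> (vscale c q))"
proof (induction bs)
  case Nil
  then show ?case by simp
next
  case (Cons b bs)
  define K where "K = c ^ length (filter Not bs)"
  note partials = partials_scaled_comp_vscale[of "dop bs \<phi>" c _ K,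
      OF smooth2_differentiable_sections[OF assms]]
  have "dop (b # bs) (\<lambda>q. \<phi> (vscale c q)) =
      (if b then partial1 else partial2) (\<lambda>q. K * dop bs \<phi> (vscale c q))"
    by (simp only: dop.simps Cons.IH K_def)
  then show ?case
    using partials(1,2) by (cases b) (auto simp: fun_eq_iff K_def)
qed

lemma smooth2_comp_vscale:
  assumes "smooth2 \<phi>"
  shows "smooth2 (\<lambda>q. \<phi> (vscale c q))"
  unfolding smooth2_def
proof (intro allI conjI)
  fix bs p
  note partials = partials_scaled_comp_vscale[of "dop bs \<phi>" c _ "c ^ length (filter Not bs)",
      OF smooth2_differentiable_sections[OF assms]]
  show "(\<lambda>s. dop bs (\<lambda>q. \<phi> (vscale c q)) (s, snd p)) differentiable at (fst p)"
    and "(\<lambda>s. dop bs (\<lambda>q. \<phi> (vscale c q)) (fst p, s)) differentiable at (snd p)"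
    using partials(3,4) by (simp_all only: dop_comp_vscale[OF assms])
next
  fix bs
  have "continuous_on UNIV (dop bs \<phi>)"
    using assms unfolding smooth2_def by blast
  then have "continuous_on UNIV (\<lambda>q. dop bs \<phi> (vscale c q))"
    by (rule continuous_on_compose2[OF _ continuous_on_vscale]) auto
  then show "continuous_on UNIV (dop bs (\<lambda>q. \<phi> (vscale c q)))"
    by (simp add: dop_comp_vscale[OF assms] continuous_on_mult_left)
qed

lemma test_fun_comp_vscale:
  assumes c: "c \<noteq> 0" and \<phi>: "test_fun (vscale c ` \<Omega>) \<phi>"
  shows "test_fun \<Omega> (\<lambda>q. \<phi> (vscale c q))"
proof -
  have "{p. \<phi> (vscale c p) \<noteq> 0} = vscale (1/c) ` {q. \<phi> q \<noteq> 0}"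
    using c by (force simp: vscale_inverse image_iff)
  then have support: "closure {p. \<phi> (vscale c p) \<noteq> 0} = vscale (1/c) ` closure {q. \<phi> q \<noteq> 0}"
    using closure_injective_linear_image[OF linear_vscale inj_vscale, of "1/c"] c by simp
  have "compact (vscale (1/c) ` closure {q. \<phi> q \<noteq> 0})"
    using \<phi> unfolding test_fun_def by (intro compact_continuous_image continuous_on_vscale) auto
  moreover have "vscale (1/c) ` closure {q. \<phi> q \<noteq> 0} \<subseteq> \<Omega>"
    using \<phi> image_vscale_inverse[OF c, of \<Omega>] unfolding test_fun_def by blast
  ultimately show ?thesis
    using \<phi> unfolding test_fun_def support by (simp add: smooth2_comp_vscale)
qed

subsection \<open>Transport of H^1 functions\<close>

lemma L2_on_iff_square_integrable:
  "L2_on \<Omega> f \<longleftrightarrow> (\<lambda>x. indicator \<Omega> x * f x) \<in> borel_measurable lborel \<and>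
     integrable lborel (\<lambda>x. (indicator \<Omega> x * f x)\<^sup>2)"
proof -
  have "indicator \<Omega> x *\<^sub>R (f x)\<^sup>2 = ((indicator \<Omega> x :: real) * f x)\<^sup>2" for x
    by (simp add: indicator_def)
  then show ?thesis
    unfolding L2_on_def set_integrable_def by simp
qed

lemma square_integrable_add:
  fixes u v :: "R2 \<Rightarrow> real"
  assumes "u \<in> borel_measurable lborel" "v \<in> borel_measurable lborel"
    and "integrable lborel (\<lambda>x. (u x)\<^sup>2)" "integrable lborel (\<lambda>x. (v x)\<^sup>2)"
  shows "integrable lborel (\<lambda>x. (u x + v x)\<^sup>2)"
proof (rule Bochner_Integration.integrable_bound)
  show "integrable lborel (\<lambda>x. 2 * (u x)\<^sup>2 + 2 * (v x)\<^sup>2)"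
    using assms by auto
  show "(\<lambda>x. (u x + v x)\<^sup>2) \<in> borel_measurable lborel"
    using assms by measurable
  have "(u x + v x)\<^sup>2 \<le> 2 * (u x)\<^sup>2 + 2 * (v x)\<^sup>2" for x
    using sum_squares_ge_zero[of "u x - v x" 0] by (simp add: power2_eq_square algebra_simps)
  then show "AE x in lborel. norm ((u x + v x)\<^sup>2) \<le> norm (2 * (u x)\<^sup>2 + 2 * (v x)\<^sup>2)"
    by simp
qed

lemma L2_on_add:
  assumes "L2_on \<Omega> f" "L2_on \<Omega> g"
  shows "L2_on \<Omega> (\<lambda>x. f x + g x)"
proof -
  have "indicator \<Omega> x * (f x + g x) = indicator \<Omega> x * f x + indicator \<Omega> x * g x" for x
    by (simp add: algebra_simps)
  then show ?thesis
    using assms unfolding L2_on_iff_square_integrable by (auto intro: square_integrable_add)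
qed

lemma L2_on_cmult:
  assumes "L2_on \<Omega> f"
  shows "L2_on \<Omega> (\<lambda>x. k * f x)"
proof -
  have "indicator \<Omega> x * (k * f x) = k * (indicator \<Omega> x * f x)"
    and "(k * (indicator \<Omega> x * f x))\<^sup>2 = k\<^sup>2 * (indicator \<Omega> x * f x)\<^sup>2" for x
    by (simp_all add: algebra_simps power_mult_distrib)
  then show ?thesis
    using assms unfolding L2_on_iff_square_integrable by (simp only:) auto
qed

lemma L2_on_sum:
  fixes k :: nat
  assumes "\<And>i. i \<le> k \<Longrightarrow> L2_on \<Omega> (g i)"
  shows "L2_on \<Omega> (\<lambda>x. \<Sum>i\<le>k. w i * g i x)"
  using assms by (induction k) (simp_all add: L2_on_add L2_on_cmult)

lemma L2_on_image_vscale: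
  assumes c: "c \<noteq> 0" and f: "L2_on \<Omega> f"
  shows "L2_on (vscale c ` \<Omega>) (\<lambda>x. f (vscale (1/c) x))"
proof -
  define u where "u = (\<lambda>x. indicator \<Omega> x * f x)"
  have u: "u \<in> borel_measurable borel" "integrable lborel (\<lambda>x. (u x)\<^sup>2)"
    using f unfolding L2_on_iff_square_integrable u_def by auto
  have "indicator (vscale c ` \<Omega>) x * f (vscale (1/c) x) = u (vscale (1/c) x)" for x
    using c by (simp add: indicator_image_vscale u_def)
  moreover have "(\<lambda>x. u (vscale (1/c) x)) \<in> borel_measurable lborel"
    using u(1) by measurable
  moreover have "integrable lborel (\<lambda>x. (u (vscale (1/c) x))\<^sup>2)"
    using integrable_comp_vscale[of "1/c" "\<lambda>x. (u x)\<^sup>2"] u(2) c by simp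
  ultimately show ?thesis
    unfolding L2_on_iff_square_integrable by simp
qed

lemma weak_grad_image_vscale:
  assumes c: "c \<noteq> 0" and grad: "weak_grad \<Omega> f g1 g2"
  shows "weak_grad (vscale c ` \<Omega>) (\<lambda>x. f (vscale (1/c) x)) (\<lambda>x. g1 (vscale (1/c) x))
           (\<lambda>x. g2 (vscale (1/c) x) / c)"
  unfolding weak_grad_def
proof (intro allI impI conjI)
  fix \<phi> assume \<phi>: "test_fun (vscale c ` \<Omega>) \<phi>"
  define \<psi> where "\<psi> = (\<lambda>q. \<phi> (vscale c q))"
  have smooth: "smooth2 \<phi>"
    using \<phi> unfolding test_fun_def by simp
  have \<psi>1: "partial1 \<psi> q = partial1 \<phi> (vscale c q)" for q
    using fun_cong[OF dop_comp_vscale[OF smooth, of "[True]" c], of q] unfolding \<psi>_def by simp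
  have \<psi>2: "partial2 \<psi> q = c * partial2 \<phi> (vscale c q)" for q
    using fun_cong[OF dop_comp_vscale[OF smooth, of "[False]" c], of q] unfolding \<psi>_def by simp
  have W1: "(LINT x:\<Omega>|lborel. f x * partial1 \<psi> x) = - (LINT x:\<Omega>|lborel. g1 x * \<psi> x)"
    and W2: "(LINT x:\<Omega>|lborel. f x * partial2 \<psi> x) = - (LINT x:\<Omega>|lborel. g2 x * \<psi> x)"
    using grad test_fun_comp_vscale[OF c \<phi>] unfolding weak_grad_def \<psi>_def by auto
  show "(LINT x:vscale c ` \<Omega>|lborel. f (vscale (1/c) x) * partial1 \<phi> x) =
        - (LINT x:vscale c ` \<Omega>|lborel. g1 (vscale (1/c) x) * \<phi> x)"
    using W1[unfolded \<psi>1] c by (simp add: set_integral_image_vscale vscale_inverse \<psi>_def)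
  have "f (vscale (1/c) (vscale c p)) * partial2 \<phi> (vscale c p) = (1/c) * (f p * partial2 \<psi> p)" for p
    using c by (simp add: vscale_inverse \<psi>2)
  moreover have "g2 (vscale (1/c) (vscale c p)) / c * \<phi> (vscale c p) = (1/c) * (g2 p * \<psi> p)" for p
    using c by (simp add: vscale_inverse \<psi>_def)
  ultimately
  show "(LINT x:vscale c ` \<Omega>|lborel. f (vscale (1/c) x) * partial2 \<phi> x) =
        - (LINT x:vscale c ` \<Omega>|lborel. g2 (vscale (1/c) x) / c * \<phi> x)"
    using c unfolding set_integral_image_vscale[OF c] by (simp add: W2)
qed

definition vscale_family ::
    "real \<Rightarrow> (nat \<Rightarrow> (R2 \<Rightarrow> real) \<times> (R2 \<Rightarrow> real) \<times> (R2 \<Rightarrow> real))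
          \<Rightarrow> nat \<Rightarrow> (R2 \<Rightarrow> real) \<times> (R2 \<Rightarrow> real) \<times> (R2 \<Rightarrow> real)" where
  "vscale_family c F = (\<lambda>i. (\<lambda>x. fst (F i) (vscale (1/c) x), \<lambda>x. fst (snd (F i)) (vscale (1/c) x),
                             \<lambda>x. snd (snd (F i)) (vscale (1/c) x) / c))"

lemma admissible_family_image_vscale:
  assumes c: "c \<noteq> 0" and F: "admissible_family \<Omega> k F"
  shows "admissible_family (vscale c ` \<Omega>) k (vscale_family c F)"
  unfolding admissible_family_def
proof (intro conjI allI impI)
  fix i assume "i \<le> k"
  then have H: "H1_with_grad \<Omega> (fst (F i)) (fst (snd (F i))) (snd (snd (F i)))"
    using F unfolding admissible_family_def by blast
  have "L2_on (vscale c ` \<Omega>) (\<lambda>x. (1/c) * snd (snd (F i)) (vscale (1/c) x))"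
    using H c by (intro L2_on_cmult L2_on_image_vscale) (auto simp: H1_with_grad_def)
  then show "H1_with_grad (vscale c ` \<Omega>) (fst (vscale_family c F i))
      (fst (snd (vscale_family c F i))) (snd (snd (vscale_family c F i)))"
    using H c by (auto simp: H1_with_grad_def vscale_family_def L2_on_image_vscale weak_grad_image_vscale)
next
  fix w :: "nat \<Rightarrow> real" and i
  assume "AE x in lborel. x \<in> vscale c ` \<Omega> \<longrightarrow> (\<Sum>i\<le>k. w i * fst (vscale_family c F i) x) = 0"
  from AE_vscale[OF c this]
  have "AE p in lborel. p \<in> \<Omega> \<longrightarrow> (\<Sum>i\<le>k. w i * fst (F i) p) = 0"
    by (rule AE_mp) (use c in \<open>auto simp: vscale_family_def vscale_inverse\<close>)
  moreover assume "i \<le> k"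
  ultimately show "w i = 0"
    using F unfolding admissible_family_def by blast
qed

lemma rayleigh_vscale_family:
  fixes w :: "nat \<Rightarrow> real"
  assumes c: "c \<noteq> 0" and F: "admissible_family \<Omega> k F"
  defines "I0 \<equiv> (LINT x:\<Omega>|lborel. (\<Sum>i\<le>k. w i * fst (F i) x)\<^sup>2)"
      and "I1 \<equiv> (LINT x:\<Omega>|lborel. (\<Sum>i\<le>k. w i * fst (snd (F i)) x)\<^sup>2)"
      and "I2 \<equiv> (LINT x:\<Omega>|lborel. (\<Sum>i\<le>k. w i * snd (snd (F i)) x)\<^sup>2)"
  shows "rayleigh \<Omega> k F w = (I1 + I2) / I0"
    and "rayleigh (vscale c ` \<Omega>) k (vscale_family c F) w = (I1 + I2 / c\<^sup>2) / I0"
    and "I0 \<ge> 0" "I1 \<ge> 0" "I2 \<ge> 0"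
proof -
  have "L2_on \<Omega> (\<lambda>x. \<Sum>i\<le>k. w i * fst (snd (F i)) x)"
    and "L2_on \<Omega> (\<lambda>x. \<Sum>i\<le>k. w i * snd (snd (F i)) x)"
    using F by (auto intro!: L2_on_sum simp: admissible_family_def H1_with_grad_def)
  then have integrable:
      "set_integrable lborel \<Omega> (\<lambda>x. (\<Sum>i\<le>k. w i * fst (snd (F i)) x)\<^sup>2)"
      "set_integrable lborel \<Omega> (\<lambda>x. (\<Sum>i\<le>k. w i * snd (snd (F i)) x)\<^sup>2)"
    unfolding L2_on_def by blast+
  then show "rayleigh \<Omega> k F w = (I1 + I2) / I0"
    unfolding rayleigh_def I0_def I1_def I2_def by simp
  have "(\<Sum>i\<le>k. w i * (snd (snd (F i)) p / c))\<^sup>2 = (\<Sum>i\<le>k. w i * snd (snd (F i)) p)\<^sup>2 / c\<^sup>2" for p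
    by (simp add: sum_divide_distrib[symmetric] power_divide)
  moreover have "rayleigh (vscale c ` \<Omega>) k (vscale_family c F) w =
     (\<bar>c\<bar> * (LINT p:\<Omega>|lborel. (\<Sum>i\<le>k. w i * fst (snd (F i)) p)\<^sup>2
                               + (\<Sum>i\<le>k. w i * (snd (snd (F i)) p / c))\<^sup>2)) / (\<bar>c\<bar> * I0)"
    unfolding rayleigh_def vscale_family_def I0_def set_integral_image_vscale[OF c]
    using c by (simp add: vscale_inverse)
  ultimately show "rayleigh (vscale c ` \<Omega>) k (vscale_family c F) w = (I1 + I2 / c\<^sup>2) / I0"
    using integrable c by (simp add: I1_def I2_def)
  show "I0 \<ge> 0" "I1 \<ge> 0" "I2 \<ge> 0"
    unfolding I0_def I1_def I2_def set_lebesgue_integral_def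
    by (auto intro!: integral_nonneg_AE simp: indicator_def)
qed

lemma rayleigh_vscale_family_bounds:
  assumes t: "t \<ge> 1" and F: "admissible_family \<Omega> k F"
  shows "rayleigh (vscale t ` \<Omega>) k (vscale_family t F) w \<le> rayleigh \<Omega> k F w"
    and "rayleigh \<Omega> k F w \<le> t\<^sup>2 * rayleigh (vscale t ` \<Omega>) k (vscale_family t F) w"
proof -
  have t0: "t \<noteq> 0"
    using t by simp
  obtain I0 I1 I2 :: real where I: "0 \<le> I0" "0 \<le> I1" "0 \<le> I2"
    and R: "rayleigh \<Omega> k F w = (I1 + I2) / I0"
    and Rt: "rayleigh (vscale t ` \<Omega>) k (vscale_family t F) w = (I1 + I2 / t\<^sup>2) / I0"
    using rayleigh_vscale_family[OF t0 F, of w] by blast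
  have grow: "x \<le> t\<^sup>2 * x" if "0 \<le> x" for x :: real
    using mult_right_mono[OF _ that, of 1 "t\<^sup>2"] t by (simp add: one_le_power)
  have "I2 / t\<^sup>2 \<le> I2"
    using grow[OF I(3)] t0 by (simp add: divide_le_eq mult.commute)
  then show "rayleigh (vscale t ` \<Omega>) k (vscale_family t F) w \<le> rayleigh \<Omega> k F w"
    unfolding R Rt using I(1) by (intro divide_right_mono) auto
  have "I1 + I2 \<le> t\<^sup>2 * (I1 + I2 / t\<^sup>2)"
    using grow[OF I(2)] t0 by (simp add: distrib_left)
  then have "(I1 + I2) / I0 \<le> t\<^sup>2 * (I1 + I2 / t\<^sup>2) / I0"
    using I(1) by (rule divide_right_mono)
  then show "rayleigh \<Omega> k F w \<le> t\<^sup>2 * rayleigh (vscale t ` \<Omega>) k (vscale_family t F) w"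
    unfolding R Rt by simp
qed

subsection \<open>Min-max values\<close>

(* Sup of a real set that is not bounded above is an arbitrary but fixed value, so comparing
   two suprema needs both sets bounded or both unbounded. *)
lemma Sup_real_unbounded_eq:
  fixes X Y :: "real set"
  assumes "\<not> bdd_above X" "\<not> bdd_above Y"
  shows "Sup X = Sup Y"
proof -
  have "(\<lambda>z. \<forall>x\<in>X. x \<le> z) = (\<lambda>z. \<forall>x\<in>Y. x \<le> z)"
    using assms unfolding bdd_above_def by (auto simp: fun_eq_iff)
  then show ?thesis
    unfolding Sup_real_def by simp
qed

lemma Sup_image_mono_comparable:
  fixes f g :: "'a \<Rightarrow> real"
  assumes "S \<noteq> {}" and "\<And>x. x \<in> S \<Longrightarrow> f x \<le> g x" and "\<And>x. x \<in> S \<Longrightarrow> g x \<le> C * f x"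
      and "C \<ge> 0"
  shows "Sup (f ` S) \<le> Sup (g ` S)"
proof (cases "bdd_above (g ` S)")
  case True
  then show ?thesis
    using assms(1,2) by (intro cSup_mono) auto
next
  case False
  have "\<not> bdd_above (f ` S)"
  proof
    assume "bdd_above (f ` S)"
    then obtain M where M: "\<And>x. x \<in> S \<Longrightarrow> f x \<le> M"
      by (auto simp: bdd_above_def)
    have "g x \<le> C * M" if "x \<in> S" for x
      using assms(3)[OF that] mult_left_mono[OF M[OF that] assms(4)] by linarith
    then have "bdd_above (g ` S)"
      by (rule bdd_aboveI2)
    with False show False ..
  qed
  then have "Sup (f ` S) = Sup (g ` S)"
    using False by (rule Sup_real_unbounded_eq)
  then show ?thesis
    by simp
qed

definition max_rayleigh ::
    "R2 set \<Rightarrow> nat \<Rightarrow> (nat \<Rightarrow> (R2 \<Rightarrow> real) \<times> (R2 \<Rightarrow> real) \<times> (R2 \<Rightarrow> real)) \<Rightarrow> real" where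
  "max_rayleigh \<Omega> k F = Sup (rayleigh \<Omega> k F ` {c. \<exists>i\<le>k. c i \<noteq> 0})"

lemma neumann_eigenvalue_eq_Inf_max_rayleigh:
  "neumann_eigenvalue \<Omega> k = Inf (max_rayleigh \<Omega> k ` {F. admissible_family \<Omega> k F})"
  unfolding neumann_eigenvalue_def max_rayleigh_def by (simp add: setcompr_eq_image image_image)

lemma rayleigh_nonneg: "rayleigh \<Omega> k F w \<ge> 0"
  unfolding rayleigh_def set_lebesgue_integral_def
  by (intro divide_nonneg_nonneg integral_nonneg_AE) (auto simp: indicator_def)

lemma bdd_below_max_rayleigh: "bdd_below (range (max_rayleigh \<Omega> k))"
proof -
  define e :: "nat \<Rightarrow> real" where "e = (\<lambda>i. if i = 0 then 1 else 0)"
  have e: "e \<in> {c. \<exists>i\<le>k. c i \<noteq> 0}"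
    unfolding e_def by auto
  have "min 0 (Sup (UNIV :: real set)) \<le> max_rayleigh \<Omega> k F" for F
  proof (cases "bdd_above (rayleigh \<Omega> k F ` {c. \<exists>i\<le>k. c i \<noteq> 0})")
    case True
    then have "rayleigh \<Omega> k F e \<le> max_rayleigh \<Omega> k F"
      unfolding max_rayleigh_def using e by (intro cSup_upper) auto
    then show ?thesis
      using rayleigh_nonneg[of \<Omega> k F e] by simp
  next
    case False
    moreover have "\<not> bdd_above (UNIV :: real set)"
      by (metis bdd_above_def UNIV_I gt_ex not_le)
    ultimately have "max_rayleigh \<Omega> k F = Sup (UNIV :: real set)"
      unfolding max_rayleigh_def by (rule Sup_real_unbounded_eq)
    then show ?thesis
      by simp
  qed
  then show ?thesis
    by (auto simp: bdd_below_def)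
qed

lemma max_rayleigh_vscale_family_le:
  assumes "t \<ge> 1" and "admissible_family \<Omega> k F"
  shows "max_rayleigh (vscale t ` \<Omega>) k (vscale_family t F) \<le> max_rayleigh \<Omega> k F"
  unfolding max_rayleigh_def
  using rayleigh_vscale_family_bounds[OF assms]
  by (intro Sup_image_mono_comparable[where C = "t\<^sup>2"]) (auto intro!: exI[of _ "\<lambda>_. 1"])

lemma Inf_image_le_Inf_image:
  fixes f :: "'a \<Rightarrow> real" and g :: "'b \<Rightarrow> real"
  assumes "bdd_below (g ` B)" and "B \<noteq> {} \<Longrightarrow> A \<noteq> {}"
      and "\<And>a. a \<in> A \<Longrightarrow> \<exists>b\<in>B. g b \<le> f a"
  shows "Inf (g ` B) \<le> Inf (f ` A)"
proof (cases "A = {}")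
  case True
  moreover have "B = {}"
    using assms(2) True by blast
  ultimately show ?thesis
    by simp
next
  case False
  show ?thesis
  proof (rule cInf_greatest)
    fix y assume "y \<in> f ` A"
    then obtain a b where "a \<in> A" "y = f a" "b \<in> B" "g b \<le> f a"
      using assms(3) by blast
    then show "Inf (g ` B) \<le> y"
      using assms(1) by (meson cInf_lower image_eqI order_trans)
  qed (use False in simp)
qed

theorem lemma3p1:
  fixes \<Omega> :: "R2 set" and t :: real and k :: nat
  assumes "lipschitz_domain \<Omega>" and "t \<ge> 1" and "k \<ge> 1"
  shows "neumann_eigenvalue (stretch t \<Omega>) k \<le> neumann_eigenvalue \<Omega> k"
proof -
  have t_nonzero: "t \<noteq> 0" "1/t \<noteq> 0"
    using assms(2) by auto
  have "\<exists>G\<in>{G. admissible_family (vscale t ` \<Omega>) k G}.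
          max_rayleigh (vscale t ` \<Omega>) k G \<le> max_rayleigh \<Omega> k F"
    if "admissible_family \<Omega> k F" for F
    using that assms(2)
    by (blast intro: admissible_family_image_vscale[OF t_nonzero(1)] max_rayleigh_vscale_family_le)
  moreover have "admissible_family \<Omega> k (vscale_family (1/t) G)"
    if "admissible_family (vscale t ` \<Omega>) k G" for G
    using admissible_family_image_vscale[OF t_nonzero(2) that] image_vscale_inverse[OF t_nonzero(1)]
    by simp
  ultimately show ?thesis
    unfolding neumann_eigenvalue_eq_Inf_max_rayleigh stretch_eq_image_vscale
    by (intro Inf_image_le_Inf_image bdd_below_mono[OF bdd_below_max_rayleigh]) auto
qed

end
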